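(* Let $n>2k\ge2$ be integers and let $J(n,k)$ be the Johnson graph with vertex set $V$ the $k$-subsets of $[n]$, two vertices adjacent iff their intersection has size $k-1$; let $A$ be its adjacency matrix, with distinct eigenvalues $\phi_0>\dots>\phi_k$ and corresponding orthogonal eigenprojections $P_0,\dots,P_k$. Let $w_1\neq w_2$ be two vertices, $\gamma>0$, and $H=-\gamma A-|w_1\rangle\langle w_1|-|w_2\rangle\langle w_2|$ on $\mathcal{H}=\mathbb{C}^V$. Let $\mathcal{H}_{\mathrm{inv}}$ be the subspace of vectors $f\in\mathcal{H}$ such that $f(v)=f(v')$ whenever $|v\cap w_1\cap w_2|=|v'\cap w_1\cap w_2|$ and the multisets $\{|v\cap w_1|,|v\cap w_2|\}$ and $\{|v'\cap w_1|,|v'\cap w_2|\}$ coincide. Let $\lambda$ be an eigenvalue of $H$ having an eigenvector in $\mathcal{H}_{\mathrm{inv}}$, and suppose $\lambda\notin\sigma(-\gamma A)$. Define $$m_i=1+\sum_{\ell=0}^k\frac{\|P_\ell|w_i\rangle\|^2}{\lambda+\gamma\phi_\ell}\ (i=1,2),\qquad m_3=\sum_{\ell=0}^k\frac{\langle w_1|P_\ell|w_2\rangle}{\lambda+\gamma\phi_\ell}.$$ Then $m_1+m_3=m_2+m_3=0$.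
   Context: $\{|v\rangle : v\in V\}$ is the computational basis; $\sigma(U)$ denotes the spectrum of $U$. *)

theory Defs
  imports "HOL-Analysis.Analysis" "HOL-Library.Multiset"
begin

definition johnson_vertices :: "nat \<Rightarrow> nat \<Rightarrow> nat set set" where
  "johnson_vertices n k = {S. S \<subseteq> {1..n} \<and> card S = k}"

definition johnson_adj :: "nat \<Rightarrow> nat set \<Rightarrow> nat set \<Rightarrow> bool" where
  "johnson_adj k u v \<longleftrightarrow> card (u \<inter> v) = k - 1"

text \<open>The Hilbert space C^V, represented as complex functions vanishing outside V.\<close>
definition vecs :: "'v set \<Rightarrow> ('v \<Rightarrow> complex) set" where
  "vecs V = {f. \<forall>v. v \<notin> V \<longrightarrow> f v = 0}"

definition cinner :: "'v set \<Rightarrow> ('v \<Rightarrow> complex) \<Rightarrow> ('v \<Rightarrow> complex) \<Rightarrow> complex" where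
  "cinner V f g = (\<Sum>v\<in>V. cnj (f v) * g v)"

definition ket :: "'v \<Rightarrow> 'v \<Rightarrow> complex" where
  "ket w = (\<lambda>v. if v = w then 1 else 0)"

definition johnson_A :: "nat \<Rightarrow> nat \<Rightarrow> (nat set \<Rightarrow> complex) \<Rightarrow> nat set \<Rightarrow> complex" where
  "johnson_A n k f = (\<lambda>u. if u \<in> johnson_vertices n k
      then (\<Sum>v\<in>johnson_vertices n k. (if johnson_adj k u v then 1 else 0) * f v) else 0)"

definition eigenvalues :: "'v set \<Rightarrow> (('v \<Rightarrow> complex) \<Rightarrow> ('v \<Rightarrow> complex)) \<Rightarrow> complex set" where
  "eigenvalues V T = {\<mu>. \<exists>f\<in>vecs V. f \<noteq> (\<lambda>_. 0) \<and> T f = (\<lambda>v. \<mu> * f v)}"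

definition eigenspace :: "'v set \<Rightarrow> (('v \<Rightarrow> complex) \<Rightarrow> ('v \<Rightarrow> complex)) \<Rightarrow> complex \<Rightarrow> ('v \<Rightarrow> complex) set" where
  "eigenspace V T \<mu> = {f\<in>vecs V. T f = (\<lambda>v. \<mu> * f v)}"

definition orth_proj :: "'v set \<Rightarrow> ('v \<Rightarrow> complex) set \<Rightarrow> ('v \<Rightarrow> complex) \<Rightarrow> ('v \<Rightarrow> complex)" where
  "orth_proj V W x = (THE y. y \<in> W \<and> (\<forall>z\<in>W. cinner V z (\<lambda>v. x v - y v) = 0))"

definition eigenproj :: "'v set \<Rightarrow> (('v \<Rightarrow> complex) \<Rightarrow> ('v \<Rightarrow> complex)) \<Rightarrow> complex \<Rightarrow> ('v \<Rightarrow> complex) \<Rightarrow> ('v \<Rightarrow> complex)" where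
  "eigenproj V T \<phi> = orth_proj V (eigenspace V T \<phi>)"

definition hamiltonian :: "nat \<Rightarrow> nat \<Rightarrow> real \<Rightarrow> nat set \<Rightarrow> nat set
    \<Rightarrow> (nat set \<Rightarrow> complex) \<Rightarrow> nat set \<Rightarrow> complex" where
  "hamiltonian n k \<gamma> w1 w2 f = (\<lambda>u. - (complex_of_real \<gamma>) * johnson_A n k f u
      - f w1 * ket w1 u - f w2 * ket w2 u)"

definition H_inv :: "nat \<Rightarrow> nat \<Rightarrow> nat set \<Rightarrow> nat set \<Rightarrow> (nat set \<Rightarrow> complex) set" where
  "H_inv n k w1 w2 = {f\<in>vecs (johnson_vertices n k).
     \<forall>v\<in>johnson_vertices n k. \<forall>v'\<in>johnson_vertices n k.
       card (v \<inter> w1 \<inter> w2) = card (v' \<inter> w1 \<inter> w2) \<and>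
       {# card (v \<inter> w1), card (v \<inter> w2) #} = {# card (v' \<inter> w1), card (v' \<inter> w2) #}
       \<longrightarrow> f v = f v'}"

end

theory Submission
  imports Defs
begin

(* If H f = E f for f in H_inv, the symmetry of H_inv gives f(w1) = f(w2) = a, so
   (E + gamma A) f = -a (|w1> + |w2>).  Since E is not in the spectrum of -gamma A, expanding in
   an orthonormal eigenbasis of A gives f = -a sum_l P_l (|w1> + |w2>) / (E + gamma phi_l).
   Evaluating at w1 and at w2 and dividing by a, which is nonzero because E is not an
   eigenvalue of -gamma A, yields the two identities, once one knows
   <w|P_l|w> = ||P_l|w>||^2 and, A being real symmetric, <w2|P_l|w1> = <w1|P_l|w2>.
   The orthonormal eigenbasis is built by repeatedly maximising the Rayleigh quotient on the
   orthogonal complement of the eigenvectors found so far. *)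

section \<open>Functions on a finite set as a Hilbert space\<close>

definition mat_op :: "'v set \<Rightarrow> ('v \<Rightarrow> 'v \<Rightarrow> complex) \<Rightarrow> ('v \<Rightarrow> complex) \<Rightarrow> 'v \<Rightarrow> complex" where
  "mat_op V M f = (\<lambda>u. if u \<in> V then (\<Sum>v\<in>V. M u v * f v) else 0)"

lemma cinner_add_right: "cinner V f (\<lambda>v. g v + h v) = cinner V f g + cinner V f h"
  by (simp add: cinner_def distrib_left sum.distrib)

lemma cinner_diff_right: "cinner V f (\<lambda>v. g v - h v) = cinner V f g - cinner V f h"
  by (simp add: cinner_def right_diff_distrib sum_subtractf)

lemma cinner_diff_left: "cinner V (\<lambda>v. g v - h v) f = cinner V g f - cinner V h f"
  by (simp add: cinner_def left_diff_distrib sum_subtractf)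

lemma cinner_scale_right: "cinner V f (\<lambda>v. c * g v) = c * cinner V f g"
  by (simp add: cinner_def sum_distrib_left mult.left_commute)

lemma cinner_scale_left: "cinner V (\<lambda>v. c * f v) g = cnj c * cinner V f g"
  by (simp add: cinner_def sum_distrib_left mult.assoc)

lemma cinner_sum_right: "cinner V f (\<lambda>v. \<Sum>i\<in>I. c i * g i v) = (\<Sum>i\<in>I. c i * cinner V f (g i))"
  by (simp add: cinner_def sum_distrib_left sum.swap[of _ I] mult.left_commute)

lemma cinner_sum_left:
  "cinner V (\<lambda>v. \<Sum>i\<in>I. c i * g i v) f = (\<Sum>i\<in>I. cnj (c i) * cinner V (g i) f)"
  by (simp add: cinner_def sum_distrib_left sum_distrib_right sum.swap[of _ I] mult.assoc)

lemma cinner_zero_left: "cinner V (\<lambda>_. 0) g = 0"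
  by (simp add: cinner_def)

lemma cinner_commute: "cinner V g f = cnj (cinner V f g)"
  by (simp add: cinner_def mult.commute)

lemma cinner_ket_left:
  assumes "finite V" "w \<in> V"
  shows "cinner V (ket w) g = g w"
proof -
  have "cinner V (ket w) g = (\<Sum>v\<in>V. if v = w then g v else 0)"
    unfolding cinner_def by (rule sum.cong) (auto simp: ket_def)
  then show ?thesis using assms by simp
qed

lemma cinner_ket_right: "finite V \<Longrightarrow> w \<in> V \<Longrightarrow> cinner V g (ket w) = cnj (g w)"
  by (metis cinner_commute cinner_ket_left)

lemma cinner_self: "cinner V f f = complex_of_real (\<Sum>v\<in>V. (cmod (f v))\<^sup>2)"
  unfolding cinner_def of_real_sum by (intro sum.cong refl) (use complex_norm_square in simp)

lemma cinner_self_real: "complex_of_real (Re (cinner V f f)) = cinner V f f"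
  by (simp add: cinner_self)

lemma Re_cinner_self_nonneg: "Re (cinner V f f) \<ge> 0"
  by (simp add: cinner_self sum_nonneg)

lemma cinner_self_eq_0:
  assumes "finite V" "f \<in> vecs V" "cinner V f f = 0"
  shows "f = (\<lambda>_. 0)"
proof
  fix v
  have "(\<Sum>v\<in>V. (cmod (f v))\<^sup>2) = 0" using assms(3) unfolding cinner_self of_real_eq_0_iff .
  then have "\<forall>v\<in>V. (cmod (f v))\<^sup>2 = 0" using assms(1) by (subst (asm) sum_nonneg_eq_0_iff) auto
  then show "f v = 0" using assms(2) by (cases "v \<in> V") (auto simp: vecs_def)
qed

lemma cinner_add_of_real_scale:
  "cinner V (\<lambda>v. a v + complex_of_real t * b v) (\<lambda>v. c v + complex_of_real t * d v)
   = cinner V a c + complex_of_real t * cinner V a d + complex_of_real t * cinner V b c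
     + complex_of_real (t\<^sup>2) * cinner V b d"
  by (simp add: cinner_def sum.distrib sum_distrib_left algebra_simps power2_eq_square)

lemma ket_in_vecs: "w \<in> V \<Longrightarrow> ket w \<in> vecs V"
  by (auto simp: vecs_def ket_def)

lemma sum_in_vecs: "(\<And>i. i \<in> I \<Longrightarrow> g i \<in> vecs V) \<Longrightarrow> (\<lambda>v. \<Sum>i\<in>I. c i * g i v) \<in> vecs V"
  by (auto simp: vecs_def)

lemma mat_op_in_vecs: "mat_op V M f \<in> vecs V"
  by (auto simp: vecs_def mat_op_def)

lemma mat_op_sum:
  "mat_op V M (\<lambda>v. \<Sum>i\<in>I. c i * g i v) = (\<lambda>u. \<Sum>i\<in>I. c i * mat_op V M (g i) u)"
  by (auto simp: mat_op_def sum_distrib_left sum.swap[of _ I] mult.left_commute)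

lemma mat_op_scale: "mat_op V M (\<lambda>v. c * f v) = (\<lambda>u. c * mat_op V M f u)"
  by (auto simp: mat_op_def sum_distrib_left algebra_simps)

lemma mat_op_add_scale:
  "mat_op V M (\<lambda>v. f v + c * g v) = (\<lambda>u. mat_op V M f u + c * mat_op V M g u)"
  by (auto simp: mat_op_def sum_distrib_left sum.distrib algebra_simps)

lemma mat_op_diff: "mat_op V M (\<lambda>v. f v - g v) = (\<lambda>u. mat_op V M f u - mat_op V M g u)"
  by (auto simp: mat_op_def sum_subtractf algebra_simps)

lemma eigenspace_diff:
  "y1 \<in> eigenspace V (mat_op V M) \<phi> \<Longrightarrow> y2 \<in> eigenspace V (mat_op V M) \<phi>
    \<Longrightarrow> (\<lambda>v. y1 v - y2 v) \<in> eigenspace V (mat_op V M) \<phi>"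
  by (auto simp: eigenspace_def vecs_def mat_op_diff algebra_simps)

lemma eigenvalue_scale:
  assumes "\<phi> \<in> eigenvalues V (mat_op V M)"
  shows "c * \<phi> \<in> eigenvalues V (\<lambda>f v. c * mat_op V M f v)"
  using assms by (auto simp: eigenvalues_def mult.assoc)

definition orthonormal :: "'v set \<Rightarrow> ('v \<Rightarrow> complex) set \<Rightarrow> bool" where
  "orthonormal V B \<longleftrightarrow> B \<subseteq> vecs V \<and> (\<forall>b\<in>B. \<forall>b'\<in>B. cinner V b b' = (if b = b' then 1 else 0))"

lemma orthonormal_subset: "orthonormal V B \<Longrightarrow> B' \<subseteq> B \<Longrightarrow> orthonormal V B'"
  unfolding orthonormal_def by blast

lemma cinner_orthonormal_sum:
  assumes "orthonormal V B" "finite B" "b' \<in> B"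
  shows "cinner V b' (\<lambda>v. \<Sum>b\<in>B. c b * b v) = c b'"
proof -
  have "cinner V b' (\<lambda>v. \<Sum>b\<in>B. c b * b v) = (\<Sum>b\<in>B. c b * cinner V b' b)"
    by (rule cinner_sum_right)
  also have "\<dots> = (\<Sum>b\<in>B. if b = b' then c b else 0)"
    using assms by (intro sum.cong refl) (auto simp: orthonormal_def)
  also have "\<dots> = c b'" using assms by simp
  finally show ?thesis .
qed

lemma bessel_inequality:
  assumes "orthonormal V B" "finite B"
  shows "(\<Sum>b\<in>B. (cmod (cinner V b x))\<^sup>2) \<le> Re (cinner V x x)"
proof -
  define s where "s = (\<lambda>v. \<Sum>b\<in>B. cinner V b x * b v)"
  define r where "r = (\<lambda>v. x v - s v)"
  have r_orth: "cinner V b r = 0" if "b \<in> B" for b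
    unfolding r_def s_def cinner_diff_right using cinner_orthonormal_sum[OF assms that] by simp
  have "cinner V r r = cinner V x r - (\<Sum>b\<in>B. cnj (cinner V b x) * cinner V b r)"
    unfolding r_def cinner_diff_left s_def cinner_sum_left by (simp add: r_def[symmetric])
  also have "\<dots> = cinner V x r" using r_orth by simp
  also have "\<dots> = cinner V x x - (\<Sum>b\<in>B. cinner V b x * cinner V x b)"
    unfolding r_def s_def cinner_diff_right cinner_sum_right ..
  also have "\<dots> = cinner V x x - complex_of_real (\<Sum>b\<in>B. (cmod (cinner V b x))\<^sup>2)"
    unfolding of_real_sum
    by (intro arg_cong2[where f="(-)"] refl sum.cong) (simp_all add: cinner_commute[of V x] complex_norm_square mult.commute flip: of_real_power)
  finally have "Re (cinner V r r) = Re (cinner V x x) - (\<Sum>b\<in>B. (cmod (cinner V b x))\<^sup>2)"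
    by simp
  then show ?thesis using Re_cinner_self_nonneg[of V r] by linarith
qed

lemma orthonormal_card_le:
  assumes "orthonormal V B" "finite B" "finite V"
  shows "card B \<le> card V"
proof -
  have "card B = (\<Sum>b\<in>B. Re (cinner V b b))"
    using assms(1) by (simp add: orthonormal_def)
  also have "\<dots> = (\<Sum>v\<in>V. \<Sum>b\<in>B. (cmod (cinner V b (ket v)))\<^sup>2)"
    using assms(3) by (subst sum.swap) (simp add: cinner_self cinner_ket_right)
  also have "\<dots> \<le> (\<Sum>v\<in>V. Re (cinner V (ket v) (ket v)))"
    by (intro sum_mono bessel_inequality assms)
  also have "\<dots> = card V"
    using assms(3) by (simp add: cinner_ket_left, simp add: ket_def)
  finally show ?thesis by simp
qed

lemma orthonormal_finite:
  assumes "orthonormal V B" "finite V"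
  shows "finite B"
proof (rule ccontr)
  assume "infinite B"
  then obtain B' where "B' \<subseteq> B" "finite B'" "card B' = Suc (card V)"
    using infinite_arbitrarily_large by blast
  then show False
    using orthonormal_card_le[of V B'] orthonormal_subset[OF assms(1)] assms(2) by force
qed

lemma orth_proj_unique:
  assumes "finite V" and W_vecs: "W \<subseteq> vecs V"
    and W_diff: "\<And>y1 y2. y1 \<in> W \<Longrightarrow> y2 \<in> W \<Longrightarrow> (\<lambda>v. y1 v - y2 v) \<in> W"
    and y: "y \<in> W" "\<forall>z\<in>W. cinner V z (\<lambda>v. x v - y v) = 0"
  shows "orth_proj V W x = y"
  unfolding orth_proj_def
proof (rule the_equality)
  show "y \<in> W \<and> (\<forall>z\<in>W. cinner V z (\<lambda>v. x v - y v) = 0)" using y by blast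
next
  fix y' assume y': "y' \<in> W \<and> (\<forall>z\<in>W. cinner V z (\<lambda>v. x v - y' v) = 0)"
  define d where "d = (\<lambda>v. y' v - y v)"
  have d_W: "d \<in> W" unfolding d_def using W_diff y' y by blast
  have "d = (\<lambda>v. (x v - y v) - (x v - y' v))" by (auto simp: d_def)
  then have "cinner V d d = cinner V d (\<lambda>v. x v - y v) - cinner V d (\<lambda>v. x v - y' v)"
    by (simp only: cinner_diff_right)
  also have "\<dots> = 0" using y y' d_W by simp
  finally have "d = (\<lambda>_. 0)" using cinner_self_eq_0[OF \<open>finite V\<close>] d_W W_vecs by blast
  then show "y' = y" unfolding d_def by (auto simp: fun_eq_iff)
qed

definition orth_compl :: "'v set \<Rightarrow> ('v \<Rightarrow> complex) set \<Rightarrow> ('v \<Rightarrow> complex) set" where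
  "orth_compl V B = {x \<in> vecs V. \<forall>b\<in>B. cinner V b x = 0}"

lemma orth_compl_add_scale:
  "x \<in> orth_compl V B \<Longrightarrow> y \<in> orth_compl V B \<Longrightarrow> (\<lambda>v. x v + c * y v) \<in> orth_compl V B"
  by (auto simp: orth_compl_def vecs_def cinner_add_right cinner_scale_right)

lemma orth_compl_scale: "x \<in> orth_compl V B \<Longrightarrow> (\<lambda>v. c * x v) \<in> orth_compl V B"
  using orth_compl_add_scale[of "\<lambda>_. 0" V B x c] by (simp add: orth_compl_def vecs_def cinner_def)

lemma orthonormal_insert:
  assumes "orthonormal V B" "e \<in> orth_compl V B" "cinner V e e = 1"
  shows "orthonormal V (insert e B)"
proof -
  have "cinner V e b = 0" if "b \<in> B" for b
    using assms(2) that cinner_commute[of V e b] by (simp add: orth_compl_def)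
  then show ?thesis using assms by (auto simp: orthonormal_def orth_compl_def)
qed

lemma continuous_on_coordinate: "continuous_on A (\<lambda>x::'v \<Rightarrow> complex. x i)"
  by (rule continuous_on_subset[OF continuous_on_product_coordinates]) simp

lemma compact_orth_compl_sphere:
  assumes "finite V"
  shows "compact {x \<in> orth_compl V B. cinner V x x = 1}" (is "compact ?S")
proof -
  have S_eq: "?S = (\<Inter>v\<in>-V. {x. x v = 0}) \<inter> (\<Inter>b\<in>B. {x. cinner V b x = 0})
      \<inter> {x. cinner V x x = 1}"
    by (auto simp: orth_compl_def vecs_def)
  have "closed ?S" unfolding S_eq unfolding cinner_def
    by (intro closed_Int closed_INT ballI closed_Collect_eq continuous_intros continuous_on_coordinate)
  define K where "K = (\<lambda>v. if v \<in> V then cball 0 1 else {0::complex})"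
  have "compactin (product_topology (\<lambda>_. euclidean) UNIV) (PiE UNIV K)"
    by (subst compactin_PiE) (auto simp: K_def)
  then have "compact (Pi UNIV K)" by (simp add: euclidean_product_topology PiE_UNIV_domain)
  moreover have "?S \<subseteq> Pi UNIV K"
  proof
    fix x assume x: "x \<in> ?S"
    then have "complex_of_real (\<Sum>v\<in>V. (cmod (x v))\<^sup>2) = 1" by (simp only: cinner_self mem_Collect_eq)
    then have "(\<Sum>v\<in>V. (cmod (x v))\<^sup>2) = 1" using of_real_eq_1_iff by blast
    show "x \<in> Pi UNIV K"
    proof (rule Pi_I)
      fix v
      show "x v \<in> K v"
      proof (cases "v \<in> V")
        case True
        then have "(cmod (x v))\<^sup>2 \<le> 1"
          using \<open>(\<Sum>v\<in>V. (cmod (x v))\<^sup>2) = 1\<close> member_le_sum[of v V "\<lambda>v. (cmod (x v))\<^sup>2"] assms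
          by simp
        then show ?thesis using True by (simp add: K_def power_le_one_iff)
      next
        case False
        then show ?thesis using x by (simp add: K_def orth_compl_def vecs_def)
      qed
    qed
  qed
  ultimately show ?thesis using compact_Int_closed[OF _ \<open>closed ?S\<close>] by (metis Int_absorb1)
qed

section \<open>Spectral theorem for Hermitian matrices\<close>

lemma nonpos_if_le_all_pos_multiples:
  fixes Y C :: real
  assumes "\<And>t. t > 0 \<Longrightarrow> Y \<le> t * C"
  shows "Y \<le> 0"
proof (rule ccontr)
  assume "\<not> Y \<le> 0"
  define t where "t = Y / (2 * (\<bar>C\<bar> + 1))"
  have "t > 0" unfolding t_def using \<open>\<not> Y \<le> 0\<close> by (intro divide_pos_pos) auto
  have "t * C \<le> t * \<bar>C\<bar>" using \<open>t > 0\<close> by (simp add: mult_left_mono)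
  also have "\<dots> < Y"
    using \<open>\<not> Y \<le> 0\<close> by (simp add: t_def field_simps add_nonneg_pos)
  finally show False using assms[OF \<open>t > 0\<close>] by simp
qed

locale hermitian_matrix =
  fixes V :: "'v set" and M :: "'v \<Rightarrow> 'v \<Rightarrow> complex"
  assumes finite_V: "finite V" and hermitian: "\<And>u v. M u v = cnj (M v u)"
begin

abbreviation T :: "('v \<Rightarrow> complex) \<Rightarrow> 'v \<Rightarrow> complex" where
  "T \<equiv> mat_op V M"

lemma cinner_T_right: "cinner V f (T g) = cinner V (T f) g"
proof -
  have "cinner V f (T g) = (\<Sum>u\<in>V. \<Sum>v\<in>V. cnj (f u) * M u v * g v)"
    by (simp add: cinner_def mat_op_def sum_distrib_left mult.assoc)
  also have "\<dots> = (\<Sum>v\<in>V. \<Sum>u\<in>V. cnj (M v u * f u) * g v)"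
    by (subst sum.swap) (intro sum.cong refl, subst hermitian, simp)
  also have "\<dots> = cinner V (T f) g"
    unfolding cinner_def mat_op_def by (simp add: sum_distrib_right)
  finally show ?thesis .
qed

lemma cinner_T_self_real: "cnj (cinner V x (T x)) = cinner V x (T x)"
  by (metis cinner_commute cinner_T_right)

lemma rayleigh_quotient_attains_max:
  assumes "u \<in> orth_compl V B" "u \<noteq> (\<lambda>_. 0)"
  obtains x0 where "x0 \<in> orth_compl V B" "cinner V x0 x0 = 1"
    "\<And>x. x \<in> orth_compl V B \<Longrightarrow>
       Re (cinner V x (T x)) \<le> Re (cinner V x0 (T x0)) * Re (cinner V x x)"
proof -
  define S where "S = {x \<in> orth_compl V B. cinner V x x = 1}"
  define q where "q = (\<lambda>x. Re (cinner V x (T x)))"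
  have "q = (\<lambda>x. Re (\<Sum>v\<in>V. \<Sum>w\<in>V. cnj (x v) * (M v w * x w)))"
    by (auto simp: q_def cinner_def mat_op_def sum_distrib_left intro!: ext sum.cong)
  then have "continuous_on S q"
    by (simp only:) (intro continuous_intros continuous_on_coordinate)
  have normalize: "(\<lambda>v. complex_of_real (1 / sqrt s) * x v) \<in> S \<and>
      q (\<lambda>v. complex_of_real (1 / sqrt s) * x v) = q x / s"
    if x: "x \<in> orth_compl V B" and s: "s = Re (cinner V x x)" "s > 0" for x s
  proof -
    let ?c = "complex_of_real (1 / sqrt s)"
    have c: "cnj ?c * ?c = complex_of_real (1 / s)"
      using s by (simp flip: of_real_mult)
    have xx: "cinner V x x = complex_of_real s" using s(1) by (simp add: cinner_self)
    have "cinner V (\<lambda>v. ?c * x v) (\<lambda>v. ?c * x v) = 1"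
      unfolding cinner_scale_left cinner_scale_right mult.assoc[symmetric] c xx
      using s(2) by (simp flip: of_real_mult)
    moreover have "q (\<lambda>v. ?c * x v) = q x / s"
      unfolding q_def mat_op_scale cinner_scale_left cinner_scale_right mult.assoc[symmetric] c
      by simp
    ultimately show ?thesis using orth_compl_scale[OF x, of ?c] by (simp add: S_def)
  qed
  have "S \<noteq> {}"
  proof -
    have "cinner V u u \<noteq> 0"
      using cinner_self_eq_0[OF finite_V] assms by (auto simp: orth_compl_def)
    then have "Re (cinner V u u) > 0"
      using Re_cinner_self_nonneg[of V u] cinner_self_real[of V u]
      by (metis less_eq_real_def of_real_0)
    then show ?thesis using normalize[OF assms(1) refl] by blast
  qed
  obtain x0 where x0: "x0 \<in> S" and x0_max: "\<forall>y\<in>S. q y \<le> q x0"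
    using continuous_attains_sup[OF _ \<open>S \<noteq> {}\<close> \<open>continuous_on S q\<close>]
      compact_orth_compl_sphere[OF finite_V] unfolding S_def by blast
  have "q x \<le> q x0 * Re (cinner V x x)" if x: "x \<in> orth_compl V B" for x
  proof (cases "Re (cinner V x x) = 0")
    case True
    then have "cinner V x x = 0" using cinner_self_real[of V x] by (metis of_real_0)
    then have "x = (\<lambda>_. 0)"
      using cinner_self_eq_0[OF finite_V] x by (simp add: orth_compl_def)
    then show ?thesis by (simp add: q_def cinner_zero_left)
  next
    case False
    then have pos: "Re (cinner V x x) > 0" using Re_cinner_self_nonneg[of V x] by simp
    then have "q x / Re (cinner V x x) \<le> q x0"
      using normalize[OF x refl pos] x0_max by metis
    then show ?thesis using pos by (simp add: pos_divide_le_eq)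
  qed
  moreover have "x0 \<in> orth_compl V B" "cinner V x0 x0 = 1" using x0 by (simp_all add: S_def)
  ultimately show ?thesis using that unfolding q_def by blast
qed

lemma rayleigh_maximizer_is_eigenvector:
  assumes U_add_scale: "\<And>x y c. x \<in> U \<Longrightarrow> y \<in> U \<Longrightarrow> (\<lambda>v. x v + c * y v) \<in> U"
    and U_vecs: "U \<subseteq> vecs V" and T_U: "\<And>x. x \<in> U \<Longrightarrow> T x \<in> U"
    and x0: "x0 \<in> U" "cinner V x0 x0 = 1"
    and max: "\<And>x. x \<in> U \<Longrightarrow>
       Re (cinner V x (T x)) \<le> Re (cinner V x0 (T x0)) * Re (cinner V x x)"
  shows "T x0 = (\<lambda>v. cinner V x0 (T x0) * x0 v)"
proof -
  define \<mu> where "\<mu> = cinner V x0 (T x0)"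
  define m where "m = Re \<mu>"
  have \<mu>_real: "\<mu> = complex_of_real m"
    using cinner_T_self_real[of x0] unfolding \<mu>_def m_def
    by (metis Reals_cnj_iff complex_is_Real_iff of_real_Re)
  define y where "y = (\<lambda>v. T x0 v - \<mu> * x0 v)"
  have "y \<in> U" unfolding y_def using U_add_scale[OF T_U[OF x0(1)] x0(1), of "- \<mu>"] by simp
  have x0_y: "cinner V x0 y = 0"
    unfolding y_def cinner_diff_right cinner_scale_right x0(2) \<mu>_def by simp
  then have y_x0: "cinner V y x0 = 0" using cinner_commute[of V y x0] by simp
  have T_x0: "T x0 = (\<lambda>v. y v + \<mu> * x0 v)" by (simp add: y_def)
  have y_T_x0: "cinner V y (T x0) = cinner V y y"
    unfolding T_x0 cinner_add_right cinner_scale_right y_x0 by simp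
  define Y where "Y = Re (cinner V y y)"
  define R where "R = Re (cinner V y (T y))"
  have yy: "cinner V y y = complex_of_real Y" by (simp add: Y_def cinner_self)
  have x0_T_y: "cinner V x0 (T y) = cinner V y y"
    using cinner_T_right[of x0 y] cinner_commute[of V "T x0" y] y_T_x0 yy by simp
  \<comment> \<open>maximality of x0 against x0 + t y, for all t > 0, forces y = 0\<close>
  have "2 * Y \<le> t * (m * Y - R)" if "t > 0" for t
  proof -
    define x where "x = (\<lambda>v. x0 v + complex_of_real t * y v)"
    have "Re (cinner V x (T x)) = m + 2 * t * Y + t\<^sup>2 * R"
      unfolding x_def mat_op_add_scale cinner_add_of_real_scale x0_T_y y_T_x0 \<mu>_def[symmetric]
      by (simp add: \<mu>_real yy R_def)
    moreover have "Re (cinner V x x) = 1 + t\<^sup>2 * Y"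
      unfolding x_def cinner_add_of_real_scale x0(2) x0_y y_x0 yy by simp
    moreover have "x \<in> U" unfolding x_def by (rule U_add_scale[OF x0(1) \<open>y \<in> U\<close>])
    then have "Re (cinner V x (T x)) \<le> m * Re (cinner V x x)"
      using max by (simp add: m_def \<mu>_def)
    ultimately have "m + 2 * t * Y + t\<^sup>2 * R \<le> m * (1 + t\<^sup>2 * Y)" by simp
    then have "t * (2 * Y) \<le> t * (t * (m * Y - R))"
      by (simp add: algebra_simps power2_eq_square)
    then show ?thesis using \<open>t > 0\<close> by simp
  qed
  then have "Y \<le> 0" using nonpos_if_le_all_pos_multiples[of "2 * Y" "m * Y - R"] by simp
  then have "Y = 0" using Re_cinner_self_nonneg[of V y] by (simp add: Y_def)
  then have "cinner V y y = 0" by (simp add: yy)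
  then have "y = (\<lambda>_. 0)" using cinner_self_eq_0[OF finite_V] \<open>y \<in> U\<close> U_vecs by blast
  then show ?thesis using T_x0 unfolding \<mu>_def[symmetric] by simp
qed

definition eigval :: "('v \<Rightarrow> complex) \<Rightarrow> complex" where
  "eigval b = cinner V b (T b)"

definition orthonormal_eigvecs :: "('v \<Rightarrow> complex) set \<Rightarrow> bool" where
  "orthonormal_eigvecs B \<longleftrightarrow> orthonormal V B \<and> (\<forall>b\<in>B. T b = (\<lambda>v. eigval b * b v))"

definition orthonormal_eigenbasis :: "('v \<Rightarrow> complex) set \<Rightarrow> bool" where
  "orthonormal_eigenbasis B \<longleftrightarrow> orthonormal_eigvecs B \<and> finite B \<and>
     (\<forall>x\<in>vecs V. x = (\<lambda>v. \<Sum>b\<in>B. cinner V b x * b v))"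

lemma eigval_real: "cnj (eigval b) = eigval b"
  unfolding eigval_def by (rule cinner_T_self_real)

lemma T_orth_compl_eigvecs:
  assumes "orthonormal_eigvecs B" "x \<in> orth_compl V B"
  shows "T x \<in> orth_compl V B"
proof -
  have "cinner V b (T x) = 0" if "b \<in> B" for b
  proof -
    have "cinner V b (T x) = cinner V (\<lambda>v. eigval b * b v) x"
      using assms(1) that by (simp add: cinner_T_right orthonormal_eigvecs_def)
    also have "\<dots> = 0" using assms(2) that by (simp add: cinner_scale_left orth_compl_def)
    finally show ?thesis .
  qed
  then show ?thesis by (simp add: orth_compl_def mat_op_in_vecs)
qed

lemma orthogonal_eigenvector_exists:
  assumes "orthonormal_eigvecs B" "u \<in> orth_compl V B" "u \<noteq> (\<lambda>_. 0)"
  obtains e where "e \<in> orth_compl V B" "cinner V e e = 1" "T e = (\<lambda>v. eigval e * e v)"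
proof -
  obtain x0 where x0: "x0 \<in> orth_compl V B" "cinner V x0 x0 = 1"
    and max: "\<And>x. x \<in> orth_compl V B \<Longrightarrow>
       Re (cinner V x (T x)) \<le> Re (cinner V x0 (T x0)) * Re (cinner V x x)"
    using rayleigh_quotient_attains_max[OF assms(2,3)] by blast
  have "T x0 = (\<lambda>v. eigval x0 * x0 v)"
    unfolding eigval_def
    by (rule rayleigh_maximizer_is_eigenvector[OF orth_compl_add_scale _
          T_orth_compl_eigvecs[OF assms(1)] x0 max])
       (auto simp: orth_compl_def)
  then show ?thesis using that x0 by blast
qed

theorem orthonormal_eigenbasis_exists: "\<exists>B. orthonormal_eigenbasis B"
proof -
  have eigvecs_card_le: "finite B \<and> card B \<le> card V" if "orthonormal_eigvecs B" for B
    using that orthonormal_finite orthonormal_card_le finite_V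
    by (auto simp: orthonormal_eigvecs_def)
  have "\<exists>B. orthonormal_eigvecs B \<and> card B = 0"
    by (intro exI[of _ "{}"]) (simp add: orthonormal_eigvecs_def orthonormal_def)
  then obtain k where "\<exists>B. orthonormal_eigvecs B \<and> card B = k"
    and k_max: "\<And>B. orthonormal_eigvecs B \<Longrightarrow> card B \<le> k"
    using Nat.ex_has_greatest_nat[of "\<lambda>j. \<exists>B. orthonormal_eigvecs B \<and> card B = j" 0 "card V"]
      eigvecs_card_le by blast
  then obtain B where B: "orthonormal_eigvecs B" "card B = k" by blast
  have "finite B" using eigvecs_card_le[OF B(1)] by simp
  have B_on: "orthonormal V B" using B(1) by (simp add: orthonormal_eigvecs_def)
  have "x = (\<lambda>v. \<Sum>b\<in>B. cinner V b x * b v)" if x: "x \<in> vecs V" for x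
  proof -
    define r where "r = (\<lambda>v. x v - (\<Sum>b\<in>B. cinner V b x * b v))"
    have "(\<lambda>v. \<Sum>b\<in>B. cinner V b x * b v) \<in> vecs V"
      using B_on by (intro sum_in_vecs) (auto simp: orthonormal_def)
    then have "r \<in> orth_compl V B"
      using x cinner_orthonormal_sum[OF B_on \<open>finite B\<close>]
      by (auto simp: r_def vecs_def orth_compl_def cinner_diff_right)
    have "r = (\<lambda>_. 0)"
    proof (rule ccontr)
      assume "r \<noteq> (\<lambda>_. 0)"
      then obtain e where e: "e \<in> orth_compl V B" "cinner V e e = 1" "T e = (\<lambda>v. eigval e * e v)"
        using orthogonal_eigenvector_exists[OF B(1) \<open>r \<in> orth_compl V B\<close>] by blast
      then have "e \<notin> B" by (auto simp: orth_compl_def)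
      have "orthonormal_eigvecs (insert e B)"
        using B(1) e orthonormal_insert by (auto simp: orthonormal_eigvecs_def)
      moreover have "card (insert e B) = Suc k" using \<open>e \<notin> B\<close> \<open>finite B\<close> B(2) by simp
      ultimately show False using k_max by fastforce
    qed
    then show ?thesis by (auto simp: r_def fun_eq_iff)
  qed
  then show ?thesis using B(1) \<open>finite B\<close> by (auto simp: orthonormal_eigenbasis_def)
qed

end

section \<open>Eigenprojections and the resolvent\<close>

lemma sum_image_fibres_divide:
  fixes h :: "'b \<Rightarrow> 'a::field"
  assumes "finite B"
  shows "(\<Sum>y\<in>g ` B. (\<Sum>b\<in>{b\<in>B. g b = y}. h b) / r y) = (\<Sum>b\<in>B. h b / r (g b))"
proof -
  have "(\<Sum>b\<in>B. h b / r (g b)) = (\<Sum>y\<in>g ` B. \<Sum>b | b \<in> B \<and> g b = y. h b / r (g b))"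
    by (rule sum.image_gen[OF assms])
  also have "\<dots> = (\<Sum>y\<in>g ` B. (\<Sum>b\<in>{b\<in>B. g b = y}. h b) / r y)"
    by (intro sum.cong refl) (simp add: sum_divide_distrib)
  finally show ?thesis by simp
qed

context hermitian_matrix
begin

lemma orthonormal_eigenbasisD:
  assumes "orthonormal_eigenbasis B"
  shows "orthonormal_eigvecs B" "orthonormal V B" "finite B"
    "\<And>b. b \<in> B \<Longrightarrow> T b = (\<lambda>v. eigval b * b v)"
    "\<And>x. x \<in> vecs V \<Longrightarrow> x = (\<lambda>v. \<Sum>b\<in>B. cinner V b x * b v)"
  using assms unfolding orthonormal_eigenbasis_def orthonormal_eigvecs_def by blast+

lemma eigvecs_cinner_eigenspace:
  assumes "orthonormal_eigvecs B" "b \<in> B" "z \<in> eigenspace V T \<phi>" "eigval b \<noteq> \<phi>"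
  shows "cinner V b z = 0"
proof -
  have "\<phi> * cinner V b z = cinner V b (T z)"
    using assms(3) by (simp add: eigenspace_def cinner_scale_right)
  also have "\<dots> = cinner V (T b) z" by (rule cinner_T_right)
  also have "\<dots> = eigval b * cinner V b z"
    using assms(1,2) by (simp add: orthonormal_eigvecs_def cinner_scale_left eigval_real)
  finally have "(\<phi> - eigval b) * cinner V b z = 0" by (simp add: algebra_simps)
  then show ?thesis using assms(4) by simp
qed

lemma eigenbasis_proj_props:
  fixes \<phi> :: complex
  assumes B: "orthonormal_eigenbasis B" and x: "x \<in> vecs V"
  defines "y \<equiv> (\<lambda>v. \<Sum>b\<in>{b\<in>B. eigval b = \<phi>}. cinner V b x * b v)"
  shows "y \<in> eigenspace V T \<phi>" and "\<forall>z\<in>eigenspace V T \<phi>. cinner V z (\<lambda>v. x v - y v) = 0"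
proof -
  note B_on = orthonormal_eigenbasisD(2)[OF B] and T_B = orthonormal_eigenbasisD(4)[OF B]
  have "y \<in> vecs V" unfolding y_def using B_on by (intro sum_in_vecs) (auto simp: orthonormal_def)
  moreover have "T y = (\<lambda>v. \<phi> * y v)"
    unfolding y_def mat_op_sum by (auto simp: T_B sum_distrib_left mult.left_commute intro!: sum.cong)
  ultimately show "y \<in> eigenspace V T \<phi>" by (simp add: eigenspace_def)
  show "\<forall>z\<in>eigenspace V T \<phi>. cinner V z (\<lambda>v. x v - y v) = 0"
  proof
    fix z assume z: "z \<in> eigenspace V T \<phi>"
    have "cinner V z x = cinner V z (\<lambda>v. \<Sum>b\<in>B. cinner V b x * b v)"
      by (rule arg_cong[OF orthonormal_eigenbasisD(5)[OF B x]])
    also have "\<dots> = (\<Sum>b\<in>B. cinner V b x * cinner V z b)" by (rule cinner_sum_right)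
    also have "\<dots> = (\<Sum>b\<in>{b\<in>B. eigval b = \<phi>}. cinner V b x * cinner V z b)"
    proof (rule sum.mono_neutral_right)
      show "\<forall>b\<in>B - {b\<in>B. eigval b = \<phi>}. cinner V b x * cinner V z b = 0"
      proof
        fix b assume "b \<in> B - {b\<in>B. eigval b = \<phi>}"
        then have "cinner V b z = 0"
          using eigvecs_cinner_eigenspace[OF orthonormal_eigenbasisD(1)[OF B] _ z] by blast
        then show "cinner V b x * cinner V z b = 0" using cinner_commute[of V z b] by simp
      qed
    qed (use orthonormal_eigenbasisD(3)[OF B] in auto)
    also have "\<dots> = cinner V z y" unfolding y_def by (rule cinner_sum_right[symmetric])
    finally show "cinner V z (\<lambda>v. x v - y v) = 0" by (simp add: cinner_diff_right)
  qed
qed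

lemma eigenproj_eq_sum:
  assumes "orthonormal_eigenbasis B" "x \<in> vecs V"
  shows "eigenproj V T \<phi> x = (\<lambda>v. \<Sum>b\<in>{b\<in>B. eigval b = \<phi>}. cinner V b x * b v)"
  unfolding eigenproj_def
  using eigenbasis_proj_props[OF assms]
  by (intro orth_proj_unique[OF finite_V] eigenspace_diff) (auto simp: eigenspace_def)

lemma eigenproj_props:
  assumes "x \<in> vecs V"
  shows "eigenproj V T \<phi> x \<in> eigenspace V T \<phi>"
    and "\<forall>z\<in>eigenspace V T \<phi>. cinner V z (\<lambda>v. x v - eigenproj V T \<phi> x v) = 0"
proof -
  obtain B where B: "orthonormal_eigenbasis B" using orthonormal_eigenbasis_exists by blast
  show "eigenproj V T \<phi> x \<in> eigenspace V T \<phi>"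
    unfolding eigenproj_eq_sum[OF B assms] by (rule eigenbasis_proj_props(1)[OF B assms])
  show "\<forall>z\<in>eigenspace V T \<phi>. cinner V z (\<lambda>v. x v - eigenproj V T \<phi> x v) = 0"
    unfolding eigenproj_eq_sum[OF B assms] by (rule eigenbasis_proj_props(2)[OF B assms])
qed

lemma eigenvalues_eq_eigval_image:
  assumes B: "orthonormal_eigenbasis B"
  shows "eigenvalues V T = eigval ` B"
proof
  show "eigval ` B \<subseteq> eigenvalues V T"
  proof
    fix \<phi> assume "\<phi> \<in> eigval ` B"
    then obtain b where b: "b \<in> B" "\<phi> = eigval b" by blast
    have "b \<in> vecs V" "cinner V b b = 1"
      using orthonormal_eigenbasisD(2)[OF B] b(1) by (auto simp: orthonormal_def)
    moreover have "T b = (\<lambda>v. \<phi> * b v)" using orthonormal_eigenbasisD(4)[OF B b(1)] b(2) by simp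
    moreover have "b \<noteq> (\<lambda>_. 0)" using \<open>cinner V b b = 1\<close> cinner_zero_left[of V b] by auto
    ultimately show "\<phi> \<in> eigenvalues V T" unfolding eigenvalues_def by blast
  qed
  show "eigenvalues V T \<subseteq> eigval ` B"
  proof
    fix \<phi> assume "\<phi> \<in> eigenvalues V T"
    then obtain z where z: "z \<in> eigenspace V T \<phi>" "z \<noteq> (\<lambda>_. 0)"
      unfolding eigenvalues_def eigenspace_def by blast
    show "\<phi> \<in> eigval ` B"
    proof (rule ccontr)
      assume "\<phi> \<notin> eigval ` B"
      then have "\<forall>b\<in>B. cinner V b z = 0"
        using eigvecs_cinner_eigenspace[OF orthonormal_eigenbasisD(1)[OF B] _ z(1)] by blast
      moreover have "z = (\<lambda>v. \<Sum>b\<in>B. cinner V b z * b v)"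
        using orthonormal_eigenbasisD(5)[OF B] z(1) unfolding eigenspace_def by blast
      ultimately have "z = (\<lambda>_. 0)" by simp
      then show False using z(2) by simp
    qed
  qed
qed

lemma eigenvalue_real:
  assumes "\<phi> \<in> eigenvalues V T"
  shows "cnj \<phi> = \<phi>"
proof -
  obtain B where "orthonormal_eigenbasis B" using orthonormal_eigenbasis_exists by blast
  then obtain b where "\<phi> = eigval b" using assms eigenvalues_eq_eigval_image by auto
  then show ?thesis by (simp add: eigval_real)
qed

lemma eigenproj_lincomb:
  assumes "x \<in> vecs V" "y \<in> vecs V"
  shows "eigenproj V T \<phi> (\<lambda>v. a * x v + c * y v)
    = (\<lambda>v. a * eigenproj V T \<phi> x v + c * eigenproj V T \<phi> y v)"
proof -
  obtain B where B: "orthonormal_eigenbasis B" using orthonormal_eigenbasis_exists by blast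
  have lc: "(\<lambda>v. a * x v + c * y v) \<in> vecs V" using assms by (simp add: vecs_def)
  show ?thesis
    unfolding eigenproj_eq_sum[OF B lc] eigenproj_eq_sum[OF B assms(1)] eigenproj_eq_sum[OF B assms(2)]
    by (simp add: cinner_add_right cinner_scale_right sum.distrib sum_distrib_left distrib_right
        mult.assoc)
qed

lemma cinner_eigenproj_ket_self:
  assumes "w \<in> V"
  shows "cinner V (eigenproj V T \<phi> (ket w)) (eigenproj V T \<phi> (ket w)) = eigenproj V T \<phi> (ket w) w"
proof -
  define p where "p = eigenproj V T \<phi> (ket w)"
  have "cinner V p (\<lambda>v. ket w v - p v) = 0"
    using eigenproj_props[OF ket_in_vecs[OF assms]] unfolding p_def by blast
  then have "cinner V p p = cinner V p (ket w)" by (simp add: cinner_diff_right)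
  also have "\<dots> = cnj (p w)" by (rule cinner_ket_right[OF finite_V assms])
  finally have "p w = cnj (cinner V p p)" by simp
  also have "\<dots> = cinner V p p" by (simp add: cinner_self)
  finally show ?thesis by (simp add: p_def)
qed

lemma eigenproj_resolvent_expansion:
  assumes f: "f \<in> vecs V" and nonsingular: "\<forall>\<phi>\<in>eigenvalues V T. E + c * \<phi> \<noteq> 0"
  shows "f w = (\<Sum>\<phi>\<in>eigenvalues V T.
    eigenproj V T \<phi> (\<lambda>u. c * T f u + E * f u) w / (E + c * \<phi>))"
proof -
  obtain B where B: "orthonormal_eigenbasis B" using orthonormal_eigenbasis_exists by blast
  define g where "g = (\<lambda>u. c * T f u + E * f u)"
  have "g \<in> vecs V" using f mat_op_in_vecs[of V M f] by (simp add: g_def vecs_def)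
  have coeff: "cinner V b f = cinner V b g / (E + c * eigval b)" if b: "b \<in> B" for b
  proof -
    have "cinner V b (T f) = eigval b * cinner V b f"
      using orthonormal_eigenbasisD(4)[OF B b]
      by (simp add: cinner_T_right cinner_scale_left eigval_real)
    then have "cinner V b g = (E + c * eigval b) * cinner V b f"
      unfolding g_def cinner_add_right cinner_scale_right by (simp add: algebra_simps)
    moreover have "E + c * eigval b \<noteq> 0"
      using nonsingular b eigenvalues_eq_eigval_image[OF B] by blast
    ultimately show ?thesis by simp
  qed
  have "f w = (\<Sum>b\<in>B. cinner V b f * b w)"
    using fun_cong[OF orthonormal_eigenbasisD(5)[OF B f], of w] .
  also have "\<dots> = (\<Sum>b\<in>B. cinner V b g * b w / (E + c * eigval b))"
    by (intro sum.cong refl) (simp add: coeff)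
  also have "\<dots> = (\<Sum>\<phi>\<in>eigval ` B. (\<Sum>b\<in>{b\<in>B. eigval b = \<phi>}. cinner V b g * b w) / (E + c * \<phi>))"
    by (rule sum_image_fibres_divide[OF orthonormal_eigenbasisD(3)[OF B], symmetric])
  also have "\<dots> = (\<Sum>\<phi>\<in>eigenvalues V T. eigenproj V T \<phi> g w / (E + c * \<phi>))"
    by (simp add: eigenvalues_eq_eigval_image[OF B] eigenproj_eq_sum[OF B \<open>g \<in> vecs V\<close>])
  finally show ?thesis by (simp add: g_def)
qed

lemma secular_equation:
  fixes c E :: complex
  assumes w12: "w1 \<in> V" "w2 \<in> V" and f: "f \<in> vecs V" "f \<noteq> (\<lambda>_. 0)" "f w1 = f w2"
    and eigvec: "(\<lambda>u. - c * T f u - f w1 * ket w1 u - f w2 * ket w2 u) = (\<lambda>v. E * f v)"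
    and E_notin: "E \<notin> eigenvalues V (\<lambda>f v. - c * T f v)"
    and w: "w \<in> {w1, w2}"
  shows "1 + (\<Sum>\<phi>\<in>eigenvalues V T.
    (eigenproj V T \<phi> (ket w1) w + eigenproj V T \<phi> (ket w2) w) / (E + c * \<phi>)) = 0"
    (is "1 + ?S = 0")
proof -
  define a where "a = f w1"
  have resolvent_eq: "(\<lambda>u. c * T f u + E * f u) = (\<lambda>u. (- a) * ket w1 u + (- a) * ket w2 u)"
  proof
    fix u
    have "- c * T f u - a * ket w1 u - a * ket w2 u = E * f u"
      using fun_cong[OF eigvec, of u] f(3) by (simp add: a_def)
    then show "c * T f u + E * f u = (- a) * ket w1 u + (- a) * ket w2 u" by algebra
  qed
  have "a \<noteq> 0"
  proof
    assume "a = 0"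
    then have "(\<lambda>v. - c * T f v) = (\<lambda>v. E * f v)"
      using resolvent_eq by (auto simp: fun_eq_iff add_eq_0_iff)
    then show False using E_notin f(1,2) by (auto simp: eigenvalues_def)
  qed
  have nonsingular: "\<forall>\<phi>\<in>eigenvalues V T. E + c * \<phi> \<noteq> 0"
  proof
    fix \<phi> assume "\<phi> \<in> eigenvalues V T"
    show "E + c * \<phi> \<noteq> 0"
    proof
      assume "E + c * \<phi> = 0"
      then have "E = - c * \<phi>" by algebra
      then show False using E_notin eigenvalue_scale[OF \<open>\<phi> \<in> eigenvalues V T\<close>, of "- c"] by simp
    qed
  qed
  have "a = f w" using w f(3) by (auto simp: a_def)
  also have "\<dots> = (\<Sum>\<phi>\<in>eigenvalues V T.
      eigenproj V T \<phi> (\<lambda>u. c * T f u + E * f u) w / (E + c * \<phi>))"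
    by (rule eigenproj_resolvent_expansion[OF f(1) nonsingular])
  also have "\<dots> = (\<Sum>\<phi>\<in>eigenvalues V T.
      eigenproj V T \<phi> (\<lambda>u. (- a) * ket w1 u + (- a) * ket w2 u) w / (E + c * \<phi>))"
    unfolding resolvent_eq ..
  also have "\<dots> = - a * ?S"
    unfolding eigenproj_lincomb[OF ket_in_vecs[OF w12(1)] ket_in_vecs[OF w12(2)]] sum_distrib_left
    by (intro sum.cong refl) (simp add: distrib_left)
  finally have "a * (1 + ?S) = 0" by algebra
  then show ?thesis using \<open>a \<noteq> 0\<close> by simp
qed

end

locale real_symmetric_matrix = hermitian_matrix +
  assumes real: "\<And>u v. cnj (M u v) = M u v"
begin

lemma cnj_eigenspace:
  assumes "cnj \<phi> = \<phi>" "z \<in> eigenspace V T \<phi>"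
  shows "(\<lambda>v. cnj (z v)) \<in> eigenspace V T \<phi>"
proof -
  have "T (\<lambda>v. cnj (z v)) = (\<lambda>u. cnj (T z u))" by (auto simp: mat_op_def real)
  also have "\<dots> = (\<lambda>u. \<phi> * cnj (z u))" using assms by (simp add: eigenspace_def)
  finally show ?thesis using assms(2) by (auto simp: eigenspace_def vecs_def)
qed

lemma eigenproj_cnj:
  assumes "cnj \<phi> = \<phi>" "x \<in> vecs V"
  shows "eigenproj V T \<phi> (\<lambda>v. cnj (x v)) = (\<lambda>v. cnj (eigenproj V T \<phi> x v))"
    (is "_ = (\<lambda>v. cnj (?p v))")
  unfolding eigenproj_def[of V T \<phi>, THEN fun_cong, of "\<lambda>v. cnj (x v)"]
proof (intro orth_proj_unique[OF finite_V] eigenspace_diff)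
  show "(\<lambda>v. cnj (?p v)) \<in> eigenspace V T \<phi>"
    by (rule cnj_eigenspace[OF assms(1) eigenproj_props(1)[OF assms(2)]])
  show "\<forall>z\<in>eigenspace V T \<phi>. cinner V z (\<lambda>v. cnj (x v) - cnj (?p v)) = 0"
  proof
    fix z assume "z \<in> eigenspace V T \<phi>"
    then have "cinner V (\<lambda>v. cnj (z v)) (\<lambda>v. x v - ?p v) = 0"
      using cnj_eigenspace[OF assms(1)] eigenproj_props(2)[OF assms(2)] by blast
    moreover have "cinner V z (\<lambda>v. cnj (x v) - cnj (?p v))
        = cnj (cinner V (\<lambda>v. cnj (z v)) (\<lambda>v. x v - ?p v))"
      by (simp add: cinner_def)
    ultimately show "cinner V z (\<lambda>v. cnj (x v) - cnj (?p v)) = 0" by simp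
  qed
qed (auto simp: eigenspace_def)

lemma eigenproj_ket_symmetric:
  assumes "\<phi> \<in> eigenvalues V T" "u \<in> V" "w \<in> V"
  shows "eigenproj V T \<phi> (ket u) w = eigenproj V T \<phi> (ket w) u"
proof -
  obtain B where B: "orthonormal_eigenbasis B" using orthonormal_eigenbasis_exists by blast
  have ket_proj: "eigenproj V T \<phi> (ket u') w' = (\<Sum>b\<in>{b\<in>B. eigval b = \<phi>}. cnj (b u') * b w')"
    if "u' \<in> V" for u' w'
    using that by (simp add: eigenproj_eq_sum[OF B ket_in_vecs] cinner_ket_right finite_V)
  have "(\<lambda>v. cnj (ket u v)) = ket u" by (simp add: ket_def fun_eq_iff)
  then have "eigenproj V T \<phi> (ket u) = (\<lambda>v. cnj (eigenproj V T \<phi> (ket u) v))"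
    using eigenproj_cnj[OF eigenvalue_real[OF assms(1)] ket_in_vecs[OF assms(2)]] by simp
  then have "eigenproj V T \<phi> (ket u) w = cnj (eigenproj V T \<phi> (ket u) w)" by metis
  also have "\<dots> = eigenproj V T \<phi> (ket w) u"
    by (simp add: ket_proj assms mult.commute)
  finally show ?thesis .
qed

end

section \<open>The Johnson graph\<close>

lemma H_inv_eq_at_marked:
  assumes "f \<in> H_inv n k w1 w2" "w1 \<in> johnson_vertices n k" "w2 \<in> johnson_vertices n k"
  shows "f w1 = f w2"
proof -
  have "card w1 = card w2" using assms(2,3) by (simp add: johnson_vertices_def)
  then have "{# card (w1 \<inter> w1), card (w1 \<inter> w2) #} = {# card (w2 \<inter> w1), card (w2 \<inter> w2) #}"
    by (simp add: Int_commute add_mset_commute)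
  moreover have "card (w1 \<inter> w1 \<inter> w2) = card (w2 \<inter> w1 \<inter> w2)"
    by (simp add: Int_commute Int_left_commute)
  ultimately show ?thesis using assms unfolding H_inv_def by blast
qed

definition johnson_adj_matrix :: "nat \<Rightarrow> nat set \<Rightarrow> nat set \<Rightarrow> complex" where
  "johnson_adj_matrix k u v = (if johnson_adj k u v then 1 else 0)"

lemma johnson_A_eq_mat_op: "johnson_A n k = mat_op (johnson_vertices n k) (johnson_adj_matrix k)"
  by (auto simp: johnson_A_def mat_op_def johnson_adj_matrix_def intro!: ext)

lemma hamiltonian_eq_mat_op:
  "hamiltonian n k \<gamma> w1 w2 f = (\<lambda>u. - complex_of_real \<gamma> *
     mat_op (johnson_vertices n k) (johnson_adj_matrix k) f u - f w1 * ket w1 u - f w2 * ket w2 u)"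
  by (simp add: hamiltonian_def johnson_A_eq_mat_op)

lemma real_symmetric_johnson_adj_matrix:
  "real_symmetric_matrix (johnson_vertices n k) (johnson_adj_matrix k)"
proof
  show "finite (johnson_vertices n k)"
    by (rule finite_subset[of _ "Pow {1..n}"]) (auto simp: johnson_vertices_def)
qed (auto simp: johnson_adj_matrix_def johnson_adj_def Int_commute)

theorem corollary2:
  fixes n k :: nat and \<gamma> :: real and w1 w2 :: "nat set" and E :: complex
  defines "V \<equiv> johnson_vertices n k"
  defines "A \<equiv> johnson_A n k"
  defines "P \<equiv> eigenproj V A"
  assumes "2 * k < n" and "1 \<le> k"
    and "w1 \<in> V" and "w2 \<in> V" and "w1 \<noteq> w2"
    and "\<gamma> > 0"
    and "\<exists>f\<in>H_inv n k w1 w2. f \<noteq> (\<lambda>_. 0) \<and> hamiltonian n k \<gamma> w1 w2 f = (\<lambda>v. E * f v)"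
    and "E \<notin> eigenvalues V (\<lambda>f v. - complex_of_real \<gamma> * A f v)"
  defines "m1 \<equiv> 1 + (\<Sum>\<phi>\<in>eigenvalues V A.
              cinner V (P \<phi> (ket w1)) (P \<phi> (ket w1)) / (E + complex_of_real \<gamma> * \<phi>))"
  defines "m2 \<equiv> 1 + (\<Sum>\<phi>\<in>eigenvalues V A.
              cinner V (P \<phi> (ket w2)) (P \<phi> (ket w2)) / (E + complex_of_real \<gamma> * \<phi>))"
  defines "m3 \<equiv> (\<Sum>\<phi>\<in>eigenvalues V A.
              cinner V (ket w1) (P \<phi> (ket w2)) / (E + complex_of_real \<gamma> * \<phi>))"
  shows "m1 + m3 = 0 \<and> m2 + m3 = 0"
proof -
  interpret real_symmetric_matrix V "johnson_adj_matrix k"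
    unfolding V_def by (rule real_symmetric_johnson_adj_matrix)
  have A: "A = T" by (simp add: A_def V_def johnson_A_eq_mat_op)
  obtain f where f: "f \<in> H_inv n k w1 w2" "f \<noteq> (\<lambda>_. 0)"
    and eigvec: "hamiltonian n k \<gamma> w1 w2 f = (\<lambda>v. E * f v)"
    using assms(10) by blast
  have "f \<in> vecs V" using f(1) by (simp add: H_inv_def V_def)
  moreover have "f w1 = f w2" using H_inv_eq_at_marked f(1) assms(6,7) by (simp add: V_def)
  moreover have "(\<lambda>u. - complex_of_real \<gamma> * T f u - f w1 * ket w1 u - f w2 * ket w2 u)
      = (\<lambda>v. E * f v)"
    using eigvec by (simp add: hamiltonian_eq_mat_op V_def)
  ultimately have secular: "1 + (\<Sum>\<phi>\<in>eigenvalues V T. (P \<phi> (ket w1) w + P \<phi> (ket w2) w)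
      / (E + complex_of_real \<gamma> * \<phi>)) = 0" if "w \<in> {w1, w2}" for w
    using secular_equation[OF assms(6,7) _ f(2)] assms(11) that by (simp add: A P_def)
  have "m1 + m3 = 1 + (\<Sum>\<phi>\<in>eigenvalues V T. (P \<phi> (ket w1) w1 + P \<phi> (ket w2) w1)
      / (E + complex_of_real \<gamma> * \<phi>))"
    unfolding m1_def m3_def P_def A
    by (simp add: cinner_eigenproj_ket_self cinner_ket_left finite_V assms(6) sum.distrib
        add_divide_distrib)
  moreover have "m2 + m3 = 1 + (\<Sum>\<phi>\<in>eigenvalues V T. (P \<phi> (ket w1) w2 + P \<phi> (ket w2) w2)
      / (E + complex_of_real \<gamma> * \<phi>))"
    unfolding m2_def m3_def P_def A
    by (simp add: cinner_eigenproj_ket_self cinner_ket_left finite_V assms(6,7) sum.distrib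
        add_divide_distrib eigenproj_ket_symmetric[of _ w1 w2] add.commute cong: sum.cong)
  ultimately show ?thesis using secular by simp
qed

end
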